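(* Fix $0<p<1$ and let $W:L^2(\mu_p)\oplus L^2(\mu_p)\to L^2(\mu_p)$, $W(f,g)=U_0f+U_2g$. Then $W$ is unitary and $$W^*K_\infty W=\begin{pmatrix}pK_\infty+pP_\phi&\sqrt{p(1-p)}P_\phi\\ \sqrt{p(1-p)}P_\phi&(1-p)K_\infty+(1-p)P_\phi\end{pmatrix}.$$
   Context: Let $S_0(x)=x/3$, $S_2(x)=(x+2)/3$ on $[0,1]$ and let $C$ be the middle-third Cantor set. For $0<p<1$, $\mu_p$ is the unique Borel probability measure on $[0,1]$ with $\mu_p=p\,\mu_p\circ S_0^{-1}+(1-p)\,\mu_p\circ S_2^{-1}$. For words $w\in\{0,2\}^n$, $S_w=S_{w_1}\circ\cdots\circ S_{w_n}$, $C_w=S_w(C)$. Inner product $\langle f,g\rangle=\int\overline fg\,d\mu_p$; $\phi=1_C$ and $P_\phi f=\langle\phi,f\rangle\phi$. $K_mf=\sum_{|u|\le m}\langle1_{C_u},f\rangle1_{C_u}$ and $K_\infty=\lim_{m\to\infty}K_m$ in operator norm (this limit exists). $(U_0f)(x)=p^{-1/2}1_{C_0}(x)f(S_0^{-1}(x))$, $(U_2f)(x)=(1-p)^{-1/2}1_{C_2}(x)f(S_2^{-1}(x))$. *)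

theory Defs
  imports "HOL-Probability.Probability"
begin

definition S :: "nat \<Rightarrow> real \<Rightarrow> real" where
  "S d x = (x + real d) / 3"

fun Sw :: "nat list \<Rightarrow> real \<Rightarrow> real" where
  "Sw [] = id"
| "Sw (d # w) = S d \<circ> Sw w"

definition words :: "nat \<Rightarrow> nat list set" where
  "words n = {w. length w = n \<and> set w \<subseteq> {0, 2}}"

definition cantor :: "real set" where
  "cantor = (\<Inter>n. \<Union>w\<in>words n. Sw w ` {0..1})"

definition cyl :: "nat list \<Rightarrow> real set" where
  "cyl w = Sw w ` cantor"

definition is_mu :: "real \<Rightarrow> real measure \<Rightarrow> bool" where
  "is_mu p M \<longleftrightarrow> prob_space M \<and> space M = {0..1} \<and>
     sets M = sets (restrict_space borel {0..1::real}) \<and>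
     (\<forall>A\<in>sets M. emeasure M A =
        ennreal p * emeasure M (S 0 -` A \<inter> space M)
      + ennreal (1 - p) * emeasure M (S 2 -` A \<inter> space M))"

text \<open>Complex L^2(M) (as functions; equality is up to a.e.)\<close>
definition L2 :: "real measure \<Rightarrow> (real \<Rightarrow> complex) set" where
  "L2 M = {f. f \<in> borel_measurable M \<and> integrable M (\<lambda>x. (cmod (f x))\<^sup>2)}"

definition ip :: "real measure \<Rightarrow> (real \<Rightarrow> complex) \<Rightarrow> (real \<Rightarrow> complex) \<Rightarrow> complex" where
  "ip M f g = (LINT x|M. cnj (f x) * g x)"

definition L2norm :: "real measure \<Rightarrow> (real \<Rightarrow> complex) \<Rightarrow> real" where
  "L2norm M f = sqrt (LINT x|M. (cmod (f x))\<^sup>2)"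

definition ind :: "real set \<Rightarrow> real \<Rightarrow> complex" where
  "ind A x = (if x \<in> A then 1 else 0)"

definition Pphi :: "real measure \<Rightarrow> (real \<Rightarrow> complex) \<Rightarrow> real \<Rightarrow> complex" where
  "Pphi M f x = ip M (ind cantor) f * ind cantor x"

definition Km :: "real measure \<Rightarrow> nat \<Rightarrow> (real \<Rightarrow> complex) \<Rightarrow> real \<Rightarrow> complex" where
  "Km M m f x = (\<Sum>u\<in>{u. length u \<le> m \<and> set u \<subseteq> {0, 2}}. ip M (ind (cyl u)) f * ind (cyl u) x)"

text \<open>U_0 f x = p^(-1/2) 1_{C_0}(x) f(S_0^{-1} x), U_2 f x = (1-p)^(-1/2) 1_{C_2}(x) f(S_2^{-1} x)\<close>
definition U0 :: "real \<Rightarrow> (real \<Rightarrow> complex) \<Rightarrow> real \<Rightarrow> complex" where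
  "U0 p f x = complex_of_real (1 / sqrt p) * ind (cyl [0]) x * f (3 * x)"

definition U2 :: "real \<Rightarrow> (real \<Rightarrow> complex) \<Rightarrow> real \<Rightarrow> complex" where
  "U2 p f x = complex_of_real (1 / sqrt (1 - p)) * ind (cyl [2]) x * f (3 * x - 2)"

definition Wop :: "real \<Rightarrow> (real \<Rightarrow> complex) \<Rightarrow> (real \<Rightarrow> complex) \<Rightarrow> real \<Rightarrow> complex" where
  "Wop p f g x = U0 p f x + U2 p g x"

end

theory Submission
  imports Defs
begin

(*
  S_0 and S_2 map C onto the disjoint halves C_0 and C_2, which carry the masses p and 1 - p
  and together cover mu_p-almost every point, so the self-similarity of mu_p turns
  int 1_{C_d}(x) phi(S_d^{-1} x) into (mass of C_d) * int phi. Hence U_0 and U_2 are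
  isometries with orthogonal ranges spanning L^2(mu_p), i.e. W is unitary.
  The cylinders of length at most m + 1 are C itself and the images S_d(C_u), |u| <= m, and
  <1_{C_{du}}, W(f_0, f_2)> = sqrt(mass of C_d) <1_{C_u}, f_d>. Therefore
  <W(f', g'), K_{m+1} W(f, g)> = p <f', K_m f> + (1 - p) <g', K_m g> + <W(f', g'), phi> <phi, W(f, g)>,
  and <phi, W(f, g)> = sqrt p <phi, f> + sqrt (1 - p) <phi, g>. Letting m tend to infinity gives
  the block matrix of W* K_infinity W.
*)

section \<open>Geometry of the Cantor set\<close>

definition cantor_level :: "nat \<Rightarrow> real set" where
  "cantor_level n = (\<Union>w\<in>words n. Sw w ` {0..1})"

lemma cantor_eq_INT_cantor_level: "cantor = (\<Inter>n. cantor_level n)"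
  unfolding cantor_def cantor_level_def by simp

lemma S_inverse [simp]: "3 * S d y - real d = y"
  unfolding S_def by (simp add: field_simps)

lemma mem_S_image_iff: "x \<in> S d ` A \<longleftrightarrow> 3 * x - real d \<in> A"
proof
  assume "3 * x - real d \<in> A"
  moreover have "x = S d (3 * x - real d)" by (simp add: S_def)
  ultimately show "x \<in> S d ` A" by blast
qed auto

lemma S_borel_measurable: "S d \<in> borel_measurable borel"
  unfolding S_def[abs_def] by measurable

lemma S_image_eq_vimage: "S d ` A = (\<lambda>x. 3 * x - real d) -` A"
  by (auto simp: mem_S_image_iff)

lemma S_image_borel: "A \<in> sets borel \<Longrightarrow> S d ` A \<in> sets borel"
  unfolding S_image_eq_vimage
  using measurable_sets[of "\<lambda>x::real. 3 * x - real d" borel borel A] by simp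

lemma S_mem_S_image_iff:
  assumes "d \<in> {0, 2}" "e \<in> {0, 2::nat}" "y \<in> {0..1}" "A \<subseteq> {0..1}"
  shows "S d y \<in> S e ` A \<longleftrightarrow> d = e \<and> y \<in> A"
  using assms by (auto simp: mem_S_image_iff S_def subset_iff)

lemma words_Suc: "words (Suc n) = Cons 0 ` words n \<union> Cons 2 ` words n"
proof
  show "words (Suc n) \<subseteq> Cons 0 ` words n \<union> Cons 2 ` words n"
    by (auto simp: words_def length_Suc_conv)
qed (auto simp: words_def)

lemma cantor_level_0: "cantor_level 0 = {0..1}"
  unfolding cantor_level_def words_def by auto

lemma cantor_level_Suc: "cantor_level (Suc n) = S 0 ` cantor_level n \<union> S 2 ` cantor_level n"
  unfolding cantor_level_def words_Suc by (simp add: image_Un UN_Un image_UN image_comp)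

lemma cantor_level_subset: "cantor_level n \<subseteq> {0..1}"
  by (induction n) (auto simp: cantor_level_0 cantor_level_Suc S_def)

lemma cantor_level_borel: "cantor_level n \<in> sets borel"
  by (induction n) (auto simp: cantor_level_0 cantor_level_Suc S_image_borel)

lemma cantor_borel: "cantor \<in> sets borel"
  unfolding cantor_eq_INT_cantor_level using cantor_level_borel by auto

lemma cantor_subset: "cantor \<subseteq> {0..1}"
  unfolding cantor_eq_INT_cantor_level using cantor_level_0 by auto

lemma S_image_cantor_subset:
  assumes "d \<in> {0, 2}"
  shows "S d ` cantor \<subseteq> cantor"
proof
  fix x assume "x \<in> S d ` cantor"
  then obtain y where y: "y \<in> cantor" "x = S d y" by auto
  have "x \<in> cantor_level n" for n
  proof (cases n)
    case 0
    then show ?thesis using y cantor_subset assms by (auto simp: cantor_level_0 S_def)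
  next
    case (Suc m)
    then show ?thesis using y assms by (auto simp: cantor_level_Suc cantor_eq_INT_cantor_level)
  qed
  then show "x \<in> cantor" unfolding cantor_eq_INT_cantor_level by auto
qed

lemma cantor_subset_S_images: "cantor \<subseteq> S 0 ` cantor \<union> S 2 ` cantor"
proof
  fix x assume "x \<in> cantor"
  then have levels: "3 * x \<in> cantor_level n \<or> 3 * x - 2 \<in> cantor_level n" for n
    unfolding cantor_eq_INT_cantor_level
    by (metis INT_iff UNIV_I Un_iff cantor_level_Suc mem_S_image_iff of_nat_0 of_nat_numeral diff_zero)
  \<comment> \<open>The two candidate preimages are 2 apart, so at most one of them lies in [0,1].\<close>
  show "x \<in> S 0 ` cantor \<union> S 2 ` cantor"
  proof (cases "x \<le> 1/2")
    case True
    then have "3 * x \<in> cantor_level n" for n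
      using levels[of n] cantor_level_subset[of n] by force
    then show ?thesis unfolding cantor_eq_INT_cantor_level by (auto simp: mem_S_image_iff)
  next
    case False
    then have "3 * x - 2 \<in> cantor_level n" for n
      using levels[of n] cantor_level_subset[of n] by force
    then show ?thesis unfolding cantor_eq_INT_cantor_level by (auto simp: mem_S_image_iff)
  qed
qed

lemma cyl_Nil: "cyl [] = cantor"
  by (simp add: cyl_def)

lemma cyl_Cons: "cyl (d # v) = S d ` cyl v"
  by (simp add: cyl_def image_comp)

lemma cyl_subset_cantor: "set v \<subseteq> {0, 2} \<Longrightarrow> cyl v \<subseteq> cantor"
proof (induction v)
  case (Cons d v)
  then have "S d ` cyl v \<subseteq> S d ` cantor" by auto
  also have "\<dots> \<subseteq> cantor" using S_image_cantor_subset Cons by auto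
  finally show ?case by (simp add: cyl_Cons)
qed (simp add: cyl_Nil)

lemma cyl_borel: "cyl v \<in> sets borel"
  by (induction v) (simp_all add: cyl_Nil cyl_Cons cantor_borel S_image_borel)

lemma mem_cyl_single: "x \<in> cyl [d] \<longleftrightarrow> 3 * x - real d \<in> cantor"
  by (simp add: cyl_Cons cyl_Nil mem_S_image_iff)

lemma cyl_0_2_disjoint: "x \<in> cyl [0] \<Longrightarrow> x \<notin> cyl [2]"
proof
  assume "x \<in> cyl [0]" "x \<in> cyl [2]"
  then have "3 * x \<in> {0..1}" "3 * x - 2 \<in> {0..1}"
    using cantor_subset by (auto simp: mem_cyl_single)
  then show False by auto
qed

lemma mem_cantor_iff_cyl: "x \<in> cantor \<longleftrightarrow> x \<in> cyl [0] \<or> x \<in> cyl [2]"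
  using cantor_subset_S_images S_image_cantor_subset[of 0] S_image_cantor_subset[of 2]
  by (auto simp: cyl_Cons cyl_Nil)

lemma ind_cantor_eq: "ind cantor x = ind (cyl [0]) x + ind (cyl [2]) x"
  using mem_cantor_iff_cyl[of x] cyl_0_2_disjoint[of x] by (auto simp: ind_def)

lemma ind_eq_indicator: "ind A = indicator A"
  by (simp add: ind_def indicator_def fun_eq_iff)

abbreviation words_upto :: "nat \<Rightarrow> nat list set" where
  "words_upto m \<equiv> {u. length u \<le> m \<and> set u \<subseteq> {0, 2}}"

lemma words_upto_Suc:
  "words_upto (Suc m) = insert [] (Cons 0 ` words_upto m \<union> Cons 2 ` words_upto m)"
proof (rule set_eqI)
  fix u :: "nat list"
  show "u \<in> words_upto (Suc m) \<longleftrightarrow> u \<in> insert [] (Cons 0 ` words_upto m \<union> Cons 2 ` words_upto m)"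
    by (cases u) auto
qed

lemma finite_words_upto: "finite (words_upto m)"
  using finite_lists_length_le[of "{0, 2 :: nat}" m] by (simp add: conj_commute)

lemma sum_words_upto_Suc:
  "(\<Sum>u\<in>words_upto (Suc m). G u) = G [] + (\<Sum>v\<in>words_upto m. G (0 # v)) + (\<Sum>v\<in>words_upto m. G (2 # v))"
proof -
  have fin: "finite (Cons d ` words_upto m)" for d :: nat
    using finite_words_upto by auto
  have "(\<Sum>u\<in>words_upto (Suc m). G u) = G [] + (\<Sum>u\<in>Cons 0 ` words_upto m \<union> Cons 2 ` words_upto m. G u)"
    unfolding words_upto_Suc using fin by (intro sum.insert) auto
  also have "\<dots> = G [] + ((\<Sum>u\<in>Cons 0 ` words_upto m. G u) + (\<Sum>u\<in>Cons 2 ` words_upto m. G u))"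
    using fin by (subst sum.union_disjoint) auto
  finally show ?thesis
    by (simp add: sum.reindex add.assoc)
qed

section \<open>Square-integrable functions\<close>

lemma borel_measurable_cnj [measurable]:
  "f \<in> borel_measurable N \<Longrightarrow> (\<lambda>x. cnj (f x)) \<in> borel_measurable N"
  using borel_measurable_continuous_onI[OF continuous_on_cnj[OF continuous_on_id]]
    measurable_compose by blast

lemma L2_borel_measurable: "f \<in> L2 M \<Longrightarrow> f \<in> borel_measurable M"
  by (simp add: L2_def)

lemma L2_integrable_norm_sq: "f \<in> L2 M \<Longrightarrow> integrable M (\<lambda>x. (cmod (f x))\<^sup>2)"
  by (simp add: L2_def)

lemma mult_le_weighted_squares:
  fixes a b e :: real
  assumes "e > 0"
  shows "a * b \<le> e / 2 * a\<^sup>2 + 1 / (2 * e) * b\<^sup>2"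
proof -
  have "2 * (e * a) * b \<le> (e * a)\<^sup>2 + b\<^sup>2"
    by (rule sum_squares_bound)
  then show ?thesis
    using assms by (simp add: field_simps power2_eq_square)
qed

lemma integrable_cnj_mult:
  assumes f: "f \<in> L2 M" and g: "g \<in> L2 M"
  shows "integrable M (\<lambda>x. cnj (f x) * g x)"
proof (rule Bochner_Integration.integrable_bound)
  show "integrable M (\<lambda>x. (cmod (f x))\<^sup>2 / 2 + (cmod (g x))\<^sup>2 / 2)"
    using L2_integrable_norm_sq[OF f] L2_integrable_norm_sq[OF g] by auto
  show "(\<lambda>x. cnj (f x) * g x) \<in> borel_measurable M"
    using L2_borel_measurable[OF f] L2_borel_measurable[OF g] by measurable
  show "AE x in M. norm (cnj (f x) * g x) \<le> norm ((cmod (f x))\<^sup>2 / 2 + (cmod (g x))\<^sup>2 / 2)"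
    using mult_le_weighted_squares[of 1 "cmod (f _)" "cmod (g _)"] by (auto simp: norm_mult)
qed

lemma L2_cmult:
  assumes f: "f \<in> L2 M"
  shows "(\<lambda>x. c * f x) \<in> L2 M"
proof -
  have "integrable M (\<lambda>x. (cmod c)\<^sup>2 * (cmod (f x))\<^sup>2)"
    using L2_integrable_norm_sq[OF f] by auto
  then show ?thesis
    using L2_borel_measurable[OF f] by (simp add: L2_def norm_mult power_mult_distrib)
qed

lemma L2_add:
  assumes f: "f \<in> L2 M" and g: "g \<in> L2 M"
  shows "(\<lambda>x. f x + g x) \<in> L2 M"
proof -
  have "(\<lambda>x. (cmod (f x + g x))\<^sup>2) = (\<lambda>x. (cmod (f x))\<^sup>2 + (cmod (g x))\<^sup>2 + 2 * Re (cnj (f x) * g x))"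
    by (simp add: fun_eq_iff cmod_power2 power2_sum algebra_simps)
  moreover have "integrable M (\<lambda>x. (cmod (f x))\<^sup>2 + (cmod (g x))\<^sup>2 + 2 * Re (cnj (f x) * g x))"
    by (intro Bochner_Integration.integrable_add integrable_mult_right integrable_Re integrable_cnj_mult L2_integrable_norm_sq f g)
  ultimately show ?thesis
    using L2_borel_measurable[OF f] L2_borel_measurable[OF g] by (simp add: L2_def)
qed

lemma L2_diff: "f \<in> L2 M \<Longrightarrow> g \<in> L2 M \<Longrightarrow> (\<lambda>x. f x - g x) \<in> L2 M"
  using L2_add[OF _ L2_cmult, of f M g "-1"] by simp

lemma L2_sum:
  assumes "finite I" "\<And>i. i \<in> I \<Longrightarrow> F i \<in> L2 M"
  shows "(\<lambda>x. \<Sum>i\<in>I. F i x) \<in> L2 M"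
  using assms
proof (induction I rule: finite_induct)
  case empty
  then show ?case by (simp add: L2_def)
next
  case (insert i I)
  then show ?case using L2_add[of "F i" M "\<lambda>x. \<Sum>i\<in>I. F i x"] by simp
qed

lemma L2_ind:
  assumes "finite_measure M" "ind A \<in> borel_measurable M"
  shows "ind A \<in> L2 M"
proof -
  have "(\<lambda>x. (cmod (ind A x))\<^sup>2) \<in> borel_measurable M"
    using assms(2) by measurable
  then have "integrable M (\<lambda>x. (cmod (ind A x))\<^sup>2)"
    by (intro finite_measure.integrable_const_bound[OF assms(1), where B=1]) (auto simp: ind_def)
  then show ?thesis
    using assms(2) by (simp add: L2_def)
qed

lemma ip_cnj_commute: "ip M g f = cnj (ip M f g)"
proof -
  have "cnj (ip M f g) = (LINT x|M. cnj (cnj (f x) * g x))"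
    unfolding ip_def by (rule Bochner_Integration.integral_cnj[symmetric])
  then show ?thesis
    by (simp add: ip_def mult.commute del: Bochner_Integration.integral_cnj)
qed

lemma ip_cmult_right: "ip M f (\<lambda>x. c * g x) = c * ip M f g"
  unfolding ip_def by (simp add: mult.left_commute)

lemma ip_add_right:
  "f \<in> L2 M \<Longrightarrow> g \<in> L2 M \<Longrightarrow> h \<in> L2 M \<Longrightarrow> ip M f (\<lambda>x. g x + h x) = ip M f g + ip M f h"
  unfolding ip_def distrib_left by (simp add: integrable_cnj_mult)

lemma ip_add_left:
  "f \<in> L2 M \<Longrightarrow> g \<in> L2 M \<Longrightarrow> h \<in> L2 M \<Longrightarrow> ip M (\<lambda>x. f x + g x) h = ip M f h + ip M g h"
  unfolding ip_def distrib_right complex_cnj_add by (simp add: integrable_cnj_mult)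

lemma ip_diff_right:
  "f \<in> L2 M \<Longrightarrow> g \<in> L2 M \<Longrightarrow> h \<in> L2 M \<Longrightarrow> ip M f (\<lambda>x. g x - h x) = ip M f g - ip M f h"
  unfolding ip_def right_diff_distrib by (simp add: integrable_cnj_mult)

lemma ip_sum_right:
  "f \<in> L2 M \<Longrightarrow> finite I \<Longrightarrow> (\<And>i. i \<in> I \<Longrightarrow> G i \<in> L2 M) \<Longrightarrow>
    ip M f (\<lambda>x. \<Sum>i\<in>I. G i x) = (\<Sum>i\<in>I. ip M f (G i))"
  unfolding ip_def sum_distrib_left by (simp add: integrable_cnj_mult)

lemma norm_ip_le:
  assumes f: "f \<in> L2 M" and g: "g \<in> L2 M" and e: "e > 0"
  shows "norm (ip M f g) \<le> e / 2 * (LINT x|M. (cmod (f x))\<^sup>2) + 1 / (2 * e) * (LINT x|M. (cmod (g x))\<^sup>2)"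
proof -
  have "norm (ip M f g) \<le> (LINT x|M. norm (cnj (f x) * g x))"
    unfolding ip_def by (rule integral_norm_bound)
  also have "\<dots> \<le> (LINT x|M. e / 2 * (cmod (f x))\<^sup>2 + 1 / (2 * e) * (cmod (g x))\<^sup>2)"
  proof (rule integral_mono)
    show "integrable M (\<lambda>x. norm (cnj (f x) * g x))"
      using integrable_cnj_mult[OF f g] by (rule integrable_norm)
    show "integrable M (\<lambda>x. e / 2 * (cmod (f x))\<^sup>2 + 1 / (2 * e) * (cmod (g x))\<^sup>2)"
      using L2_integrable_norm_sq[OF f] L2_integrable_norm_sq[OF g] by auto
    show "norm (cnj (f x) * g x) \<le> e / 2 * (cmod (f x))\<^sup>2 + 1 / (2 * e) * (cmod (g x))\<^sup>2" for x
      using mult_le_weighted_squares[OF e, of "cmod (f x)" "cmod (g x)"] by (simp add: norm_mult)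
  qed
  also have "\<dots> = e / 2 * (LINT x|M. (cmod (f x))\<^sup>2) + 1 / (2 * e) * (LINT x|M. (cmod (g x))\<^sup>2)"
    using L2_integrable_norm_sq[OF f] L2_integrable_norm_sq[OF g] by simp
  finally show ?thesis .
qed

lemma ip_tendsto_right:
  assumes f: "f \<in> L2 M" and G: "\<And>m. G m \<in> L2 M" "g \<in> L2 M"
    and lim: "(\<lambda>m. L2norm M (\<lambda>x. G m x - g x)) \<longlonglongrightarrow> 0"
  shows "(\<lambda>m. ip M f (G m)) \<longlonglongrightarrow> ip M f g"
proof (rule LIMSEQ_I)
  fix r :: real assume r: "r > 0"
  define F where "F = (LINT x|M. (cmod (f x))\<^sup>2)"
  define D where "D m = (LINT x|M. (cmod (G m x - g x))\<^sup>2)" for m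
  define e where "e = r / (F + 1)"
  have F: "F \<ge> 0" and D: "D m \<ge> 0" for m
    unfolding F_def D_def by auto
  have e: "e > 0" "e * F < r"
    using r F by (auto simp: e_def field_simps)
  have "(\<lambda>m. (L2norm M (\<lambda>x. G m x - g x))\<^sup>2) \<longlonglongrightarrow> 0"
    using tendsto_power[OF lim, of 2] by simp
  then have "(\<lambda>m. D m) \<longlonglongrightarrow> 0"
    using D by (simp add: L2norm_def D_def)
  then obtain N where N: "\<And>m. m \<ge> N \<Longrightarrow> D m < e * r"
    using LIMSEQ_D[of D 0 "e * r"] e r D by (auto simp: abs_of_nonneg)
  show "\<exists>N. \<forall>m\<ge>N. norm (ip M f (G m) - ip M f g) < r"
  proof (intro exI allI impI)
    fix m assume "m \<ge> N"
    have "ip M f (G m) - ip M f g = ip M f (\<lambda>x. G m x - g x)"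
      using f G by (simp add: ip_diff_right)
    also have "norm \<dots> \<le> e / 2 * F + 1 / (2 * e) * D m"
      unfolding F_def D_def using f G e by (intro norm_ip_le L2_diff) auto
    also have "\<dots> < r / 2 + 1 / (2 * e) * (e * r)"
      using e N[OF \<open>m \<ge> N\<close>] by (intro add_strict_mono mult_strict_left_mono) auto
    also have "\<dots> = r"
      using e by simp
    finally show "norm (ip M f (G m) - ip M f g) < r" .
  qed
qed

lemma L2norm_tendsto_of_uniform:
  assumes unif: "\<forall>e>0. \<exists>N. \<forall>m\<ge>N. \<forall>f\<in>A. L2norm M (\<lambda>x. K m f x - K' f x) \<le> e * L2norm M f"
    and f: "f \<in> A"
  shows "(\<lambda>m. L2norm M (\<lambda>x. K m f x - K' f x)) \<longlonglongrightarrow> 0"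
proof (rule LIMSEQ_I)
  fix r :: real assume r: "r > 0"
  have nonneg: "L2norm M h \<ge> 0" for h
    by (simp add: L2norm_def)
  define e where "e = r / (L2norm M f + 1)"
  have "e > 0" "e * L2norm M f < r"
    using r nonneg[of f] by (auto simp: e_def field_simps)
  then obtain N where "\<forall>m\<ge>N. L2norm M (\<lambda>x. K m f x - K' f x) \<le> e * L2norm M f"
    using unif f by blast
  then show "\<exists>N. \<forall>m\<ge>N. norm (L2norm M (\<lambda>x. K m f x - K' f x) - 0) < r"
    using \<open>e * L2norm M f < r\<close> nonneg by (metis abs_of_nonneg diff_zero le_less_trans real_norm_def)
qed

section \<open>The self-similar measure\<close>

locale cantor_measure =
  fixes p :: real and M :: "real measure"
  assumes p_pos: "0 < p" and p_less_1: "p < 1" and is_mu: "is_mu p M"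
begin

lemma prob_space_M: "prob_space M"
  using is_mu by (simp add: is_mu_def)

lemma finite_measure_M: "finite_measure M"
  using prob_space_M by (rule prob_space.finite_measure)

lemma space_M: "space M = {0..1}"
  using is_mu by (simp add: is_mu_def)

lemma sets_M: "sets M = sets (restrict_space borel {0..1::real})"
  using is_mu by (simp add: is_mu_def)

lemma emeasure_self_similar:
  "A \<in> sets M \<Longrightarrow> emeasure M A =
     ennreal p * emeasure M (S 0 -` A \<inter> space M) + ennreal (1 - p) * emeasure M (S 2 -` A \<inter> space M)"
  using is_mu by (simp add: is_mu_def)

lemma borel_measurable_M: "f \<in> borel_measurable borel \<Longrightarrow> f \<in> borel_measurable M"
  using measurable_restrict_space1 measurable_cong_sets[OF sets_M refl] by blast

lemma measurable_M_M:
  assumes "h \<in> borel_measurable borel" "\<And>x. x \<in> {0..1} \<Longrightarrow> h x \<in> {0..(1::real)}"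
  shows "h \<in> measurable M M"
proof -
  have "h \<in> measurable (restrict_space borel {0..1}) (restrict_space borel {0..1})"
    by (rule measurable_restrict_space3) (use assms in auto)
  then show ?thesis
    by (simp add: measurable_cong_sets[OF sets_M sets_M])
qed

lemma S_measurable: "d \<in> {0, 2} \<Longrightarrow> S d \<in> measurable M M"
  by (rule measurable_M_M) (auto simp: S_def S_borel_measurable)

lemma S_in_space: "d \<in> {0, 2} \<Longrightarrow> x \<in> space M \<Longrightarrow> S d x \<in> space M"
  by (auto simp: space_M S_def)

lemma ind_borel_measurable: "A \<in> sets borel \<Longrightarrow> ind A \<in> borel_measurable M"
  unfolding ind_eq_indicator by (intro borel_measurable_M borel_measurable_indicator)

lemma L2_ind_borel: "A \<in> sets borel \<Longrightarrow> ind A \<in> L2 M"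
  by (intro L2_ind finite_measure_M ind_borel_measurable)

lemma nn_integral_self_similar:
  assumes "g \<in> borel_measurable M"
  shows "(\<integral>\<^sup>+x. g x \<partial>M) = ennreal p * (\<integral>\<^sup>+x. g (S 0 x) \<partial>M) + ennreal (1 - p) * (\<integral>\<^sup>+x. g (S 2 x) \<partial>M)"
  using assms
proof induct
  case (cong f g)
  have "(\<integral>\<^sup>+x. f (S d x) \<partial>M) = (\<integral>\<^sup>+x. g (S d x) \<partial>M)" if "d \<in> {0, 2}" for d
    by (rule nn_integral_cong) (use cong S_in_space[OF that] in auto)
  moreover have "(\<integral>\<^sup>+x. f x \<partial>M) = (\<integral>\<^sup>+x. g x \<partial>M)"
    by (rule nn_integral_cong) (use cong in auto)
  ultimately show ?case
    using cong(4) by simp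
next
  case (set A)
  have "(\<integral>\<^sup>+x. indicator A (S d x) \<partial>M) = emeasure M (S d -` A \<inter> space M)" if "d \<in> {0, 2}" for d
  proof -
    have "(\<integral>\<^sup>+x. indicator A (S d x) \<partial>M) = (\<integral>\<^sup>+x. indicator (S d -` A \<inter> space M) x \<partial>M)"
      by (rule nn_integral_cong) (auto simp: indicator_def)
    then show ?thesis
      using measurable_sets[OF S_measurable[OF that] set] by simp
  qed
  then show ?case
    using emeasure_self_similar[OF set] set by simp
next
  case (mult u c)
  have "(\<lambda>x. u (S d x)) \<in> borel_measurable M" if "d \<in> {0, 2}" for d
    using measurable_compose[OF S_measurable[OF that] mult(2)] .
  then show ?case
    using mult by (simp add: nn_integral_cmult algebra_simps)
next
  case (add u v)
  have "(\<lambda>x. u (S d x)) \<in> borel_measurable M" "(\<lambda>x. v (S d x)) \<in> borel_measurable M"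
    if "d \<in> {0, 2}" for d
    using measurable_compose[OF S_measurable[OF that]] add by auto
  then show ?case
    using add by (simp add: nn_integral_add algebra_simps)
next
  case (seq U)
  have meas: "(\<lambda>x. U i (S d x)) \<in> borel_measurable M" if "d \<in> {0, 2}" for d i
    using measurable_compose[OF S_measurable[OF that] seq(1)] .
  have inc: "incseq (\<lambda>i x. U i (S d x))" for d
    using seq(4) by (auto simp: incseq_def le_fun_def)
  have "(\<integral>\<^sup>+x. (SUP i. U i) x \<partial>M) = (SUP i. \<integral>\<^sup>+x. U i x \<partial>M)"
    using seq by (simp add: nn_integral_monotone_convergence_SUP image_comp)
  moreover have "(\<integral>\<^sup>+x. (SUP i. U i) (S d x) \<partial>M) = (SUP i. \<integral>\<^sup>+x. U i (S d x) \<partial>M)"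
    if "d \<in> {0, 2}" for d
    using nn_integral_monotone_convergence_SUP[OF inc[of d] meas[OF that]] by (simp add: image_comp)
  moreover have "incseq (\<lambda>i. \<integral>\<^sup>+x. U i (S d x) \<partial>M)" for d
    using inc[of d] by (auto simp: incseq_def le_fun_def intro!: nn_integral_mono)
  ultimately show ?case
    using seq(3) by (simp add: SUP_mult_left_ennreal ennreal_SUP_add[symmetric] incseq_def mult_left_mono)
qed

definition weight :: "nat \<Rightarrow> real" where
  "weight d = (if d = 0 then p else 1 - p)"

lemma weight_pos: "weight d > 0"
  using p_pos p_less_1 by (simp add: weight_def)

lemma integrable_comp_S:
  fixes h :: "real \<Rightarrow> 'b::{banach, second_countable_topology}"
  assumes h: "integrable M h" and d: "d \<in> {0, 2}"
  shows "integrable M (\<lambda>x. h (S d x))"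
proof -
  have hm: "h \<in> borel_measurable M"
    using h by auto
  let ?I = "\<integral>\<^sup>+x. ennreal (norm (h (S d x))) \<partial>M"
  have "ennreal (weight d) * ?I \<le> (\<integral>\<^sup>+x. ennreal (norm (h x)) \<partial>M)"
    using d nn_integral_self_similar[of "\<lambda>x. ennreal (norm (h x))"] hm by (auto simp: weight_def)
  also have "\<dots> < \<infinity>"
    using h by (simp add: integrable_iff_bounded)
  finally have "?I < \<infinity>"
    using weight_pos[of d] by (cases "?I = 0") (auto simp: ennreal_mult_less_top)
  then show ?thesis
    using measurable_compose[OF S_measurable[OF d] hm] by (simp add: integrable_iff_bounded)
qed

lemma integral_self_similar_real:
  fixes h :: "real \<Rightarrow> real"
  assumes h: "integrable M h"
  shows "integral\<^sup>L M h = p * integral\<^sup>L M (\<lambda>x. h (S 0 x)) + (1 - p) * integral\<^sup>L M (\<lambda>x. h (S 2 x))"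
proof -
  have h0: "integrable M (\<lambda>x. h (S 0 x))" and h2: "integrable M (\<lambda>x. h (S 2 x))"
    using integrable_comp_S[OF h] by auto
  have hm: "h \<in> borel_measurable M"
    using h by auto
  define P where "P d = (\<integral>\<^sup>+x. ennreal (h (S d x)) \<partial>M)" for d
  define N where "N d = (\<integral>\<^sup>+x. ennreal (- h (S d x)) \<partial>M)" for d
  have fin: "P 0 < \<top>" "N 0 < \<top>" "P 2 < \<top>" "N 2 < \<top>"
    using h0 h2 unfolding P_def N_def real_integrable_def by (auto simp: less_top)
  have enn2real_comb: "enn2real (ennreal p * u + ennreal (1 - p) * v) = p * enn2real u + (1 - p) * enn2real v"
    if "u < \<top>" "v < \<top>" for u v
    using that p_pos p_less_1 by (simp add: enn2real_plus ennreal_mult_less_top enn2real_mult)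
  have "integral\<^sup>L M h = enn2real (ennreal p * P 0 + ennreal (1 - p) * P 2) - enn2real (ennreal p * N 0 + ennreal (1 - p) * N 2)"
    unfolding real_lebesgue_integral_def[OF h] P_def N_def
    using nn_integral_self_similar[of "\<lambda>x. ennreal (h x)"] nn_integral_self_similar[of "\<lambda>x. ennreal (- h x)"] hm
    by simp
  also have "\<dots> = p * (enn2real (P 0) - enn2real (N 0)) + (1 - p) * (enn2real (P 2) - enn2real (N 2))"
    unfolding enn2real_comb[OF fin(1,3)] enn2real_comb[OF fin(2,4)] by (simp add: algebra_simps)
  also have "\<dots> = p * integral\<^sup>L M (\<lambda>x. h (S 0 x)) + (1 - p) * integral\<^sup>L M (\<lambda>x. h (S 2 x))"
    unfolding real_lebesgue_integral_def[OF h0] real_lebesgue_integral_def[OF h2] P_def N_def ..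
  finally show ?thesis .
qed

lemma integral_self_similar:
  fixes h :: "real \<Rightarrow> complex"
  assumes h: "integrable M h"
  shows "integral\<^sup>L M h = of_real p * integral\<^sup>L M (\<lambda>x. h (S 0 x)) + of_real (1 - p) * integral\<^sup>L M (\<lambda>x. h (S 2 x))"
proof (rule complex_eqI)
  have h0: "integrable M (\<lambda>x. h (S 0 x))" and h2: "integrable M (\<lambda>x. h (S 2 x))"
    using integrable_comp_S[OF h] by auto
  show "Re (integral\<^sup>L M h) = Re (of_real p * integral\<^sup>L M (\<lambda>x. h (S 0 x)) + of_real (1 - p) * integral\<^sup>L M (\<lambda>x. h (S 2 x)))"
    using integral_self_similar_real[of "\<lambda>x. Re (h x)"] h h0 h2 by (simp add: integral_Re)
  show "Im (integral\<^sup>L M h) = Im (of_real p * integral\<^sup>L M (\<lambda>x. h (S 0 x)) + of_real (1 - p) * integral\<^sup>L M (\<lambda>x. h (S 2 x)))"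
    using integral_self_similar_real[of "\<lambda>x. Im (h x)"] h h0 h2 by (simp add: integral_Im)
qed

lemma AE_in_cantor: "AE x in M. x \<in> cantor"
proof -
  define E where "E n = {0..1} - cantor_level n" for n
  have E_sets: "E n \<in> sets M" for n
  proof -
    have "E n = (UNIV - cantor_level n) \<inter> {0..1}"
      by (auto simp: E_def)
    then show ?thesis
      using cantor_level_borel[of n] by (simp add: sets_M sets_restrict_space_iff)
  qed
  have E_pre: "S d -` E (Suc n) \<inter> space M = E n" if "d \<in> {0, 2}" for d n
  proof -
    have "S d y \<in> cantor_level (Suc n) \<longleftrightarrow> y \<in> cantor_level n" if "y \<in> {0..1}" for y
      unfolding cantor_level_Suc
      using S_mem_S_image_iff[OF \<open>d \<in> {0, 2}\<close> _ that cantor_level_subset] \<open>d \<in> {0, 2}\<close> by auto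
    then show ?thesis
      using \<open>d \<in> {0, 2}\<close> by (auto simp: E_def space_M S_def)
  qed
  \<comment> \<open>Self-similarity makes the mass outside level n+1 a convex combination of the mass outside level n.\<close>
  have "emeasure M (E n) = 0" for n
  proof (induction n)
    case 0
    then show ?case by (simp add: E_def cantor_level_0)
  next
    case (Suc n)
    then show ?case
      using emeasure_self_similar[OF E_sets[of "Suc n"]] E_pre[of 0 n] E_pre[of 2 n] by simp
  qed
  then have "(\<Union>n. E n) \<in> null_sets M"
    using E_sets by (auto intro!: null_sets_UN)
  moreover have "{x \<in> space M. x \<notin> cantor} \<subseteq> (\<Union>n. E n)"
    by (auto simp: space_M E_def cantor_eq_INT_cantor_level)
  ultimately show ?thesis
    by (rule AE_I')
qed


lemma cyl_rescaled_borel_measurable: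
  fixes phi :: "real \<Rightarrow> complex"
  assumes phi: "phi \<in> borel_measurable M"
  shows "(\<lambda>x. ind (cyl [d]) x * phi (3 * x - real d)) \<in> borel_measurable M"
proof -
  \<comment> \<open>Clamping to [0,1] makes the argument of phi stay in the space of M without changing the product.\<close>
  define clamp where "clamp x = min (max (3 * x - real d) 0) 1" for x :: real
  have "clamp \<in> measurable M M"
    unfolding clamp_def by (rule measurable_M_M) auto
  then have "(\<lambda>x. ind (cyl [d]) x * phi (clamp x)) \<in> borel_measurable M"
    using ind_borel_measurable[OF cyl_borel] measurable_compose[of clamp M M phi] phi by measurable
  moreover have "ind (cyl [d]) x * phi (clamp x) = ind (cyl [d]) x * phi (3 * x - real d)" for x
    using cantor_subset by (auto simp: ind_def clamp_def mem_cyl_single)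
  ultimately show ?thesis
    by simp
qed

lemma cyl_rescaled_comp_S:
  assumes "d \<in> {0, 2}" "e \<in> {0, 2}" "y \<in> space M"
  shows "ind (cyl [d]) (S e y) * phi (3 * S e y - real d) = (if e = d then ind cantor y * phi y else 0)"
proof -
  have "S e y \<in> cyl [d] \<longleftrightarrow> e = d \<and> y \<in> cantor"
    using S_mem_S_image_iff[OF assms(2,1) _ cantor_subset] assms(3) by (simp add: space_M cyl_Cons cyl_Nil)
  then show ?thesis
    by (auto simp: ind_def)
qed

lemma integrable_cyl_rescaled:
  fixes phi :: "real \<Rightarrow> complex"
  assumes phi: "integrable M phi" and d: "d \<in> {0, 2}"
  shows "integrable M (\<lambda>x. ind (cyl [d]) x * phi (3 * x - real d))"
proof -
  define psi where "psi = (\<lambda>x. ind (cyl [d]) x * phi (3 * x - real d))"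
  have psi_meas: "psi \<in> borel_measurable M"
    unfolding psi_def using phi by (intro cyl_rescaled_borel_measurable) auto
  have "(\<integral>\<^sup>+x. ennreal (norm (psi (S e x))) \<partial>M) < \<top>" if e: "e \<in> {0, 2}" for e
  proof -
    have "(\<integral>\<^sup>+x. ennreal (norm (psi (S e x))) \<partial>M) \<le> (\<integral>\<^sup>+x. ennreal (norm (phi x)) \<partial>M)"
      using cyl_rescaled_comp_S[OF d e] by (intro nn_integral_mono) (auto simp: psi_def ind_def norm_mult)
    also have "\<dots> < \<top>"
      using phi by (simp add: integrable_iff_bounded)
    finally show ?thesis .
  qed
  then have "(\<integral>\<^sup>+x. ennreal (norm (psi x)) \<partial>M) < \<top>"
    using nn_integral_self_similar[of "\<lambda>x. ennreal (norm (psi x))"] psi_meas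
    by (simp add: ennreal_mult_less_top)
  then show ?thesis
    using psi_meas by (simp add: integrable_iff_bounded psi_def)
qed

lemma integral_cyl_rescaled:
  fixes phi :: "real \<Rightarrow> complex"
  assumes phi: "integrable M phi" and d: "d \<in> {0, 2}"
  shows "(LINT x|M. ind (cyl [d]) x * phi (3 * x - real d)) = of_real (weight d) * integral\<^sup>L M phi"
proof -
  have "(LINT x|M. ind (cyl [d]) (S e x) * phi (3 * S e x - real d)) = (if e = d then integral\<^sup>L M phi else 0)"
    if e: "e \<in> {0, 2}" for e
  proof -
    have "(LINT x|M. ind (cyl [d]) (S e x) * phi (3 * S e x - real d))
        = (LINT x|M. (if e = d then ind cantor x * phi x else 0))"
      using cyl_rescaled_comp_S[OF d e] by (intro Bochner_Integration.integral_cong) auto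
    also have "\<dots> = (if e = d then integral\<^sup>L M phi else 0)"
    proof -
      have "(\<lambda>x. ind cantor x * phi x) \<in> borel_measurable M"
        using ind_borel_measurable[OF cantor_borel] borel_measurable_integrable[OF phi] by measurable
      then show ?thesis
        using AE_in_cantor borel_measurable_integrable[OF phi] by (auto simp: ind_def intro!: integral_cong_AE)
    qed
    finally show ?thesis .
  qed
  then show ?thesis
    using integral_self_similar[OF integrable_cyl_rescaled[OF phi d]] d by (auto simp: weight_def)
qed


section \<open>The unitary W\<close>

definition Uop :: "nat \<Rightarrow> (real \<Rightarrow> complex) \<Rightarrow> real \<Rightarrow> complex" where
  "Uop d f x = of_real (1 / sqrt (weight d)) * ind (cyl [d]) x * f (3 * x - real d)"

lemma Wop_eq_Uop: "Wop p f g = (\<lambda>x. Uop 0 f x + Uop 2 g x)"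
  by (simp add: fun_eq_iff Wop_def U0_def U2_def Uop_def weight_def)

lemma cnj_Uop_mult_Uop:
  "cnj (Uop d f' x) * Uop d f x
     = of_real (1 / weight d) * (ind (cyl [d]) x * (cnj (f' (3 * x - real d)) * f (3 * x - real d)))"
proof -
  have "cnj (of_real (1 / sqrt (weight d))) * of_real (1 / sqrt (weight d)) = (of_real (1 / weight d) :: complex)"
    using weight_pos[of d] by (simp flip: of_real_mult)
  then show ?thesis
    unfolding Uop_def by (auto simp: ind_def algebra_simps)
qed

lemma Uop_orthogonal: "cnj (Uop 0 f x) * Uop 2 g x = 0" "cnj (Uop 2 g x) * Uop 0 f x = 0"
  using cyl_0_2_disjoint[of x] by (auto simp: Uop_def ind_def)

lemma
  assumes f: "f \<in> L2 M" and f': "f' \<in> L2 M" and d: "d \<in> {0, 2}"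
  shows integrable_cnj_Uop_mult_Uop: "integrable M (\<lambda>x. cnj (Uop d f' x) * Uop d f x)"
    and ip_Uop_Uop: "ip M (Uop d f') (Uop d f) = ip M f' f"
proof -
  have phi: "integrable M (\<lambda>y. cnj (f' y) * f y)"
    using integrable_cnj_mult[OF f' f] .
  show "integrable M (\<lambda>x. cnj (Uop d f' x) * Uop d f x)"
    unfolding cnj_Uop_mult_Uop using integrable_cyl_rescaled[OF phi d] by simp
  show "ip M (Uop d f') (Uop d f) = ip M f' f"
    unfolding ip_def cnj_Uop_mult_Uop integral_mult_right_zero integral_cyl_rescaled[OF phi d]
    using weight_pos[of d] by (simp flip: of_real_mult)
qed

lemma Uop_L2:
  assumes f: "f \<in> L2 M" and d: "d \<in> {0, 2}"
  shows "Uop d f \<in> L2 M"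
proof -
  have "(\<lambda>x. of_real (1 / sqrt (weight d)) * (ind (cyl [d]) x * f (3 * x - real d))) \<in> borel_measurable M"
    using cyl_rescaled_borel_measurable[OF L2_borel_measurable[OF f]] by measurable
  then have "Uop d f \<in> borel_measurable M"
    by (simp add: Uop_def[abs_def] mult.assoc)
  moreover have "integrable M (\<lambda>x. Re (cnj (Uop d f x) * Uop d f x))"
    using integrable_cnj_Uop_mult_Uop[OF f f d] by (rule integrable_Re)
  moreover have "Re (cnj z * z) = (cmod z)\<^sup>2" for z
    by (simp add: cmod_power2 power2_eq_square[symmetric])
  ultimately show ?thesis
    by (simp add: L2_def)
qed

lemma Wop_L2: "f \<in> L2 M \<Longrightarrow> g \<in> L2 M \<Longrightarrow> Wop p f g \<in> L2 M"
  unfolding Wop_eq_Uop by (intro L2_add Uop_L2) auto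

lemma ip_Wop_Wop:
  assumes "f \<in> L2 M" "g \<in> L2 M" "f' \<in> L2 M" "g' \<in> L2 M"
  shows "ip M (Wop p f' g') (Wop p f g) = ip M f' f + ip M g' g"
proof -
  have "ip M (Wop p f' g') (Wop p f g) = (LINT x|M. cnj (Uop 0 f' x) * Uop 0 f x + cnj (Uop 2 g' x) * Uop 2 g x)"
    unfolding ip_def Wop_eq_Uop by (simp add: distrib_left distrib_right Uop_orthogonal)
  also have "\<dots> = ip M (Uop 0 f') (Uop 0 f) + ip M (Uop 2 g') (Uop 2 g)"
    using assms by (simp add: ip_def integrable_cnj_Uop_mult_Uop)
  finally show ?thesis
    using assms by (simp add: ip_Uop_Uop)
qed

lemma Wop_surjective:
  assumes h: "h \<in> L2 M"
  shows "\<exists>f\<in>L2 M. \<exists>g\<in>L2 M. AE x in M. Wop p f g x = h x"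
proof -
  have h_S: "(\<lambda>y. c * h (S d y)) \<in> L2 M" if d: "d \<in> {0, 2}" for c d
    using measurable_compose[OF S_measurable[OF d] L2_borel_measurable[OF h]]
      integrable_comp_S[OF L2_integrable_norm_sq[OF h] d]
    by (intro L2_cmult) (simp add: L2_def)
  define f where "f y = of_real (sqrt p) * h (S 0 y)" for y
  define g where "g y = of_real (sqrt (1 - p)) * h (S 2 y)" for y
  have "Wop p f g x = h x" if "x \<in> cantor" for x
  proof -
    have "S 0 (3 * x) = x" "S 2 (3 * x - 2) = x"
      by (simp_all add: S_def)
    moreover have "sqrt p \<noteq> 0" "sqrt (1 - p) \<noteq> 0"
      using p_pos p_less_1 by auto
    ultimately show ?thesis
      using that mem_cantor_iff_cyl[of x] cyl_0_2_disjoint[of x]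
      by (auto simp: Wop_def U0_def U2_def f_def g_def ind_def simp flip: of_real_mult)
  qed
  then have "AE x in M. Wop p f g x = h x"
    using AE_in_cantor by auto
  moreover have "f \<in> L2 M" "g \<in> L2 M"
    unfolding f_def[abs_def] g_def[abs_def] using h_S by auto
  ultimately show ?thesis
    by blast
qed


section \<open>W and the cylinder projections\<close>

lemma ip_cyl_Cons_Uop:
  assumes v: "set v \<subseteq> {0, 2}" and d: "d \<in> {0, 2}" and e: "e \<in> {0, 2}" and F: "F \<in> L2 M"
  shows "ip M (ind (cyl (d # v))) (Uop e F)
           = (if d = e then of_real (sqrt (weight d)) * ip M (ind (cyl v)) F else 0)"
proof (cases "d = e")
  case True
  have "cnj (ind (cyl (d # v)) x) * Uop d F x
      = of_real (1 / sqrt (weight d)) * (ind (cyl [d]) x * (cnj (ind (cyl v) (3 * x - real d)) * F (3 * x - real d)))"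
    for x
    using cyl_subset_cantor[OF v] by (auto simp: Uop_def ind_def cyl_Cons cyl_Nil mem_S_image_iff)
  then have "ip M (ind (cyl (d # v))) (Uop d F)
      = of_real (1 / sqrt (weight d)) * (of_real (weight d) * ip M (ind (cyl v)) F)"
    unfolding ip_def
    using integral_cyl_rescaled[OF integrable_cnj_mult[OF L2_ind_borel[OF cyl_borel] F] d] by simp
  also have "\<dots> = of_real (sqrt (weight d)) * ip M (ind (cyl v)) F"
  proof -
    have "1 / sqrt (weight d) * weight d = sqrt (weight d)"
      using weight_pos[of d] by (simp add: real_div_sqrt)
    then show ?thesis
      by (metis mult.assoc of_real_mult)
  qed
  finally show ?thesis
    using True by simp
next
  case False
  have "cyl (d # v) \<subseteq> cyl [d]"
    using cyl_subset_cantor[OF v] by (auto simp: cyl_Cons cyl_Nil)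
  then have "cnj (ind (cyl (d # v)) x) * Uop e F x = 0" for x
    using False d e cyl_0_2_disjoint[of x] by (auto simp: Uop_def ind_def)
  then have "(\<lambda>x. cnj (ind (cyl (d # v)) x) * Uop e F x) = (\<lambda>x. 0)"
    by (rule ext)
  then show ?thesis
    using False by (simp only: ip_def) simp
qed

lemma ip_cyl_Cons_Wop:
  assumes "set v \<subseteq> {0, 2}" "d \<in> {0, 2}" "f \<in> L2 M" "g \<in> L2 M"
  shows "ip M (ind (cyl (d # v))) (Wop p f g)
           = of_real (sqrt (weight d)) * ip M (ind (cyl v)) (if d = 0 then f else g)"
  using assms
  by (auto simp: Wop_eq_Uop ip_add_right Uop_L2 L2_ind_borel cyl_borel ip_cyl_Cons_Uop)

lemma ip_cantor_Uop:
  assumes e: "e \<in> {0, 2}" and F: "F \<in> L2 M"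
  shows "ip M (ind cantor) (Uop e F) = of_real (sqrt (weight e)) * ip M (ind cantor) F"
proof -
  have "ind cantor = (\<lambda>x. ind (cyl [0]) x + ind (cyl [2]) x)"
    using ind_cantor_eq by auto
  then have "ip M (ind cantor) (Uop e F) = ip M (ind (cyl [0])) (Uop e F) + ip M (ind (cyl [2])) (Uop e F)"
    using e F by (simp add: ip_add_left L2_ind_borel cyl_borel Uop_L2)
  then show ?thesis
    using e F by (auto simp: ip_cyl_Cons_Uop cyl_Nil)
qed

lemma ip_cantor_Wop:
  assumes "f \<in> L2 M" "g \<in> L2 M"
  shows "ip M (ind cantor) (Wop p f g)
           = of_real (sqrt p) * ip M (ind cantor) f + of_real (sqrt (1 - p)) * ip M (ind cantor) g"
  using assms
  by (simp add: Wop_eq_Uop ip_add_right Uop_L2 L2_ind_borel cantor_borel ip_cantor_Uop weight_def)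

lemma Km_eq: "Km M m f = (\<lambda>x. \<Sum>u\<in>words_upto m. ip M (ind (cyl u)) f * ind (cyl u) x)"
  by (simp add: Km_def fun_eq_iff)

lemma Km_L2: "Km M m f \<in> L2 M"
  unfolding Km_eq by (intro L2_sum finite_words_upto L2_cmult L2_ind_borel cyl_borel)

lemma ip_Km:
  assumes "h \<in> L2 M"
  shows "ip M h (Km M m f) = (\<Sum>u\<in>words_upto m. ip M (ind (cyl u)) f * ip M h (ind (cyl u)))"
  unfolding Km_eq using assms
  by (simp add: ip_sum_right finite_words_upto L2_cmult L2_ind_borel cyl_borel ip_cmult_right)

lemma ip_Km_Suc_Wop:
  assumes f: "f \<in> L2 M" and g: "g \<in> L2 M" and f': "f' \<in> L2 M" and g': "g' \<in> L2 M"
  shows "ip M (Wop p f' g') (Km M (Suc m) (Wop p f g))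
           = ip M (Wop p f' g') (ind cantor) * ip M (ind cantor) (Wop p f g)
             + of_real p * ip M f' (Km M m f) + of_real (1 - p) * ip M g' (Km M m g)"
proof -
  define G where "G u = ip M (ind (cyl u)) (Wop p f g) * ip M (Wop p f' g') (ind (cyl u))" for u
  have G_Cons: "G (d # v) = of_real (weight d)
      * (ip M (ind (cyl v)) (if d = 0 then f else g) * ip M (if d = 0 then f' else g') (ind (cyl v)))"
    if "d \<in> {0, 2}" "v \<in> words_upto m" for d v
  proof -
    have "of_real (sqrt (weight d)) * of_real (sqrt (weight d)) = (of_real (weight d) :: complex)"
      using weight_pos[of d] by (simp flip: of_real_mult)
    then show ?thesis
      using that f g f' g'
      by (simp add: G_def ip_cyl_Cons_Wop ip_cnj_commute[of M "Wop p f' g'"]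
          ip_cnj_commute[of M "if d = 0 then f' else g'"] algebra_simps)
  qed
  have "ip M (Wop p f' g') (Km M (Suc m) (Wop p f g)) = (\<Sum>u\<in>words_upto (Suc m). G u)"
    unfolding G_def using f' g' by (simp add: ip_Km Wop_L2 mult.commute)
  also have "\<dots> = G [] + (\<Sum>v\<in>words_upto m. G (0 # v)) + (\<Sum>v\<in>words_upto m. G (2 # v))"
    by (rule sum_words_upto_Suc)
  also have "\<dots> = G [] + of_real p * ip M f' (Km M m f) + of_real (1 - p) * ip M g' (Km M m g)"
    using f' g' by (simp add: G_Cons weight_def ip_Km sum_distrib_left mult.commute)
  finally show ?thesis
    by (simp add: G_def cyl_Nil mult.commute)
qed

lemma Pphi_L2: "Pphi M f \<in> L2 M"
proof -
  have "(\<lambda>x. ip M (ind cantor) f * ind cantor x) \<in> L2 M"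
    by (intro L2_cmult L2_ind_borel cantor_borel)
  then show ?thesis
    by (simp add: Pphi_def[abs_def])
qed

lemma ip_Pphi: "ip M h (Pphi M f) = ip M (ind cantor) f * ip M h (ind cantor)"
  using ip_cmult_right[of M h "ip M (ind cantor) f" "ind cantor"] by (simp add: Pphi_def[abs_def])

lemma ip_Wop_Kinf_Wop:
  fixes Kinf :: "(real \<Rightarrow> complex) \<Rightarrow> real \<Rightarrow> complex"
  assumes Kinf_L2: "\<And>f. f \<in> L2 M \<Longrightarrow> Kinf f \<in> L2 M"
    and Km_weak: "\<And>f g. f \<in> L2 M \<Longrightarrow> g \<in> L2 M \<Longrightarrow> (\<lambda>m. ip M f (Km M m g)) \<longlonglongrightarrow> ip M f (Kinf g)"
    and f: "f \<in> L2 M" and g: "g \<in> L2 M" and f': "f' \<in> L2 M" and g': "g' \<in> L2 M"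
  shows "ip M (Wop p f' g') (Kinf (Wop p f g))
          = ip M f' (\<lambda>x. of_real p * Kinf f x + of_real p * Pphi M f x
                          + of_real (sqrt (p * (1 - p))) * Pphi M g x)
          + ip M g' (\<lambda>x. of_real (sqrt (p * (1 - p))) * Pphi M f x
                          + of_real (1 - p) * Kinf g x + of_real (1 - p) * Pphi M g x)"
proof -
  define c where "c = ip M (Wop p f' g') (ind cantor) * ip M (ind cantor) (Wop p f g)"
  have "(\<lambda>m. ip M (Wop p f' g') (Km M (Suc m) (Wop p f g))) \<longlonglongrightarrow> ip M (Wop p f' g') (Kinf (Wop p f g))"
    using LIMSEQ_Suc[OF Km_weak[OF Wop_L2[OF f' g'] Wop_L2[OF f g]]] .
  moreover have "(\<lambda>m. ip M (Wop p f' g') (Km M (Suc m) (Wop p f g)))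
      \<longlonglongrightarrow> c + of_real p * ip M f' (Kinf f) + of_real (1 - p) * ip M g' (Kinf g)"
    unfolding ip_Km_Suc_Wop[OF f g f' g'] c_def
    by (intro tendsto_intros Km_weak f g f' g')
  ultimately have K_Wop: "ip M (Wop p f' g') (Kinf (Wop p f g))
      = c + of_real p * ip M f' (Kinf f) + of_real (1 - p) * ip M g' (Kinf g)"
    by (rule LIMSEQ_unique)
  define sp where "sp = complex_of_real (sqrt p)"
  define sq where "sq = complex_of_real (sqrt (1 - p))"
  have sqrt_facts: "of_real p = sp * sp" "of_real (1 - p) = sq * sq"
      "of_real (sqrt (p * (1 - p))) = sp * sq" "cnj sp = sp" "cnj sq = sq"
    using p_pos p_less_1 by (simp_all add: sp_def sq_def real_sqrt_mult flip: of_real_mult)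
  have "c = (sp * ip M f' (ind cantor) + sq * ip M g' (ind cantor))
            * (sp * ip M (ind cantor) f + sq * ip M (ind cantor) g)"
    unfolding c_def ip_cnj_commute[of M "Wop p f' g'"] ip_cnj_commute[of M f'] ip_cnj_commute[of M g']
    using f g f' g' by (simp add: ip_cantor_Wop sqrt_facts(4,5) sp_def[symmetric] sq_def[symmetric])
  moreover have "ip M f' (\<lambda>x. of_real p * Kinf f x + of_real p * Pphi M f x
                          + of_real (sqrt (p * (1 - p))) * Pphi M g x)
      = of_real p * ip M f' (Kinf f) + of_real p * (ip M (ind cantor) f * ip M f' (ind cantor))
        + of_real (sqrt (p * (1 - p))) * (ip M (ind cantor) g * ip M f' (ind cantor))"
    using f' Kinf_L2[OF f] by (simp add: ip_add_right ip_cmult_right L2_add L2_cmult Pphi_L2 ip_Pphi)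
  moreover have "ip M g' (\<lambda>x. of_real (sqrt (p * (1 - p))) * Pphi M f x
                          + of_real (1 - p) * Kinf g x + of_real (1 - p) * Pphi M g x)
      = of_real (sqrt (p * (1 - p))) * (ip M (ind cantor) f * ip M g' (ind cantor))
        + of_real (1 - p) * ip M g' (Kinf g) + of_real (1 - p) * (ip M (ind cantor) g * ip M g' (ind cantor))"
    using g' Kinf_L2[OF g] by (simp add: ip_add_right ip_cmult_right L2_add L2_cmult Pphi_L2 ip_Pphi)
  ultimately show ?thesis
    unfolding K_Wop sqrt_facts(1-3) by (simp add: algebra_simps)
qed

end

theorem corollary6p4:
  fixes p :: real and M :: "real measure" and Kinf :: "(real \<Rightarrow> complex) \<Rightarrow> real \<Rightarrow> complex"
  assumes p: "0 < p" "p < 1"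
    and mu: "is_mu p M"
    and Kinf_L2: "\<And>f. f \<in> L2 M \<Longrightarrow> Kinf f \<in> L2 M"
    and Kinf_lim: "\<forall>e>0. \<exists>N. \<forall>m\<ge>N. \<forall>f\<in>L2 M.
                      L2norm M (\<lambda>x. Km M m f x - Kinf f x) \<le> e * L2norm M f"
  shows
    "(\<forall>f\<in>L2 M. \<forall>g\<in>L2 M. Wop p f g \<in> L2 M)
     \<and> (\<forall>f\<in>L2 M. \<forall>g\<in>L2 M. \<forall>f'\<in>L2 M. \<forall>g'\<in>L2 M.
          ip M (Wop p f' g') (Wop p f g) = ip M f' f + ip M g' g)
     \<and> (\<forall>h\<in>L2 M. \<exists>f\<in>L2 M. \<exists>g\<in>L2 M. AE x in M. Wop p f g x = h x)
     \<and> (\<forall>f\<in>L2 M. \<forall>g\<in>L2 M. \<forall>f'\<in>L2 M. \<forall>g'\<in>L2 M.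
          ip M (Wop p f' g') (Kinf (Wop p f g))
          = ip M f' (\<lambda>x. of_real p * Kinf f x + of_real p * Pphi M f x
                          + of_real (sqrt (p * (1 - p))) * Pphi M g x)
          + ip M g' (\<lambda>x. of_real (sqrt (p * (1 - p))) * Pphi M f x
                          + of_real (1 - p) * Kinf g x + of_real (1 - p) * Pphi M g x))"
proof -
  interpret cantor_measure p M
    using p mu by unfold_locales
  have Km_weak: "(\<lambda>m. ip M f (Km M m g)) \<longlonglongrightarrow> ip M f (Kinf g)" if "f \<in> L2 M" "g \<in> L2 M" for f g
    using that by (intro ip_tendsto_right Km_L2 Kinf_L2 L2norm_tendsto_of_uniform[OF Kinf_lim])
  show ?thesis
    by (intro conjI ballI Wop_L2 ip_Wop_Wop Wop_surjective ip_Wop_Kinf_Wop[OF Kinf_L2 Km_weak])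
qed

end
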